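(* Let $T$ be an $\omega_2$-Kurepa-tree, for each $\alpha<\omega_2$ let $\xi\mapsto\tau(\alpha,\xi)$ be a map from $\omega_1$ onto the level $T_\alpha$, and let $A_\iota$ ($\iota<\omega_2$) be unbounded subsets of $\omega_2$. Then there is a cofinal branch $b$ through $T$ that oscillates on every $A_\iota$, $\iota<\omega_2$.
   Context: An $\omega_2$-Kurepa-tree is a tree of height $\omega_2$ all of whose levels have size $\leq\aleph_1$ and which has at least $\aleph_3$ cofinal ($\omega_2$-)branches. Given the enumeration $\tau$, a cofinal branch $b$ is identified with the function $b:\omega_2\to\omega_1$ where $b(\alpha)$ is the least $\xi$ such that $\tau(\alpha,\xi)$ is the node of $b$ on level $\alpha$. For unbounded $A\subseteq\omega_2$, $b$ oscillates on $A$ if for all $\alpha<\omega_2$ and all $\zeta<\omega_1$ there are $\beta>\alpha$ with $\beta\in A$ and $\xi>\zeta$ such that $b(\beta)=\xi$. *)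

theory Defs
  imports Main
begin

unbundle cardinal_syntax

text \<open>The well-order of a wellorder type, as a relation (used to identify the
  type with an initial ordinal).\<close>
definition ord_rel :: "('a::wellorder) rel" where
  "ord_rel = {(x, y). x \<le> y}"

text \<open>A tree of height the (well-ordered) index type 'k, given by its levels
  lev and its strict tree order lt.\<close>
definition tree_nodes :: "('k \<Rightarrow> 'n set) \<Rightarrow> 'n set" where
  "tree_nodes lev = (\<Union>\<alpha>. lev \<alpha>)"

definition is_tree :: "(('k::wellorder) \<Rightarrow> 'n set) \<Rightarrow> ('n \<Rightarrow> 'n \<Rightarrow> bool) \<Rightarrow> bool" where
  "is_tree lev lt \<longleftrightarrow>
     (\<forall>\<alpha> \<beta>. \<alpha> \<noteq> \<beta> \<longrightarrow> lev \<alpha> \<inter> lev \<beta> = {}) \<and>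
     (\<forall>x y. lt x y \<longrightarrow> x \<in> tree_nodes lev \<and> y \<in> tree_nodes lev) \<and>
     (\<forall>x. \<not> lt x x) \<and>
     (\<forall>x y z. lt x y \<longrightarrow> lt y z \<longrightarrow> lt x z) \<and>
     (\<forall>\<alpha> \<beta> x y. x \<in> lev \<beta> \<longrightarrow> y \<in> lev \<alpha> \<longrightarrow> lt y x \<longrightarrow> \<alpha> < \<beta>) \<and>
     (\<forall>\<alpha> \<beta> x. x \<in> lev \<beta> \<longrightarrow> \<alpha> < \<beta> \<longrightarrow> (\<exists>!y. y \<in> lev \<alpha> \<and> lt y x))"

definition cofinal_branch :: "('k \<Rightarrow> 'n set) \<Rightarrow> ('n \<Rightarrow> 'n \<Rightarrow> bool) \<Rightarrow> 'n set \<Rightarrow> bool" where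
  "cofinal_branch lev lt B \<longleftrightarrow>
     B \<subseteq> tree_nodes lev \<and>
     (\<forall>x\<in>B. \<forall>y\<in>B. x = y \<or> lt x y \<or> lt y x) \<and>
     (\<forall>x\<in>B. \<forall>y. lt y x \<longrightarrow> y \<in> B) \<and>
     (\<forall>\<alpha>. B \<inter> lev \<alpha> \<noteq> {})"

text \<open>omega_2-Kurepa tree, where 'k is (the type of) omega_2 and 'j is omega_1:
  levels of size at most aleph_1 and at least aleph_3 cofinal branches.\<close>
definition kurepa_tree ::
  "(('k::wellorder) \<Rightarrow> 'n set) \<Rightarrow> ('n \<Rightarrow> 'n \<Rightarrow> bool) \<Rightarrow> ('j::wellorder) itself \<Rightarrow> bool" where
  "kurepa_tree lev lt _ \<longleftrightarrow>
     is_tree lev lt \<and>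
     (\<forall>\<alpha>. card_of (lev \<alpha>) <=o card_of (UNIV :: 'j set)) \<and>
     cardSuc (ord_rel :: 'k rel) <=o card_of {B. cofinal_branch lev lt B}"

definition branch_fun :: "('k \<Rightarrow> ('j::wellorder) \<Rightarrow> 'n) \<Rightarrow> 'n set \<Rightarrow> 'k \<Rightarrow> 'j" where
  "branch_fun \<tau> B \<alpha> = (LEAST \<xi>. \<tau> \<alpha> \<xi> \<in> B)"

definition unbounded :: "('k::wellorder) set \<Rightarrow> bool" where
  "unbounded A \<longleftrightarrow> (\<forall>\<alpha>. \<exists>\<beta>\<in>A. \<alpha> < \<beta>)"

definition oscillates :: "(('k::wellorder) \<Rightarrow> ('j::wellorder)) \<Rightarrow> 'k set \<Rightarrow> bool" where
  "oscillates b A \<longleftrightarrow> (\<forall>\<alpha> \<zeta>. \<exists>\<beta> \<xi>. \<beta> > \<alpha> \<and> \<beta> \<in> A \<and> \<xi> > \<zeta> \<and> b \<beta> = \<xi>)"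

end

theory Submission imports Defs begin

text \<open>Suppose no cofinal branch oscillates on every \<open>A\<^sub>\<iota>\<close>. Then every branch \<open>b\<close> is
  eventually bounded on some \<open>A\<^sub>\<iota>\<close>: \<open>b(\<beta>) \<le> \<zeta>\<close> for all \<open>\<beta> \<in> A\<^sub>\<iota>\<close> above some \<open>\<alpha>\<close>. There are only
  \<open>\<aleph>\<^sub>2\<close> triples \<open>(\<iota>, \<alpha>, \<zeta>)\<close>, and each of them admits at most \<open>\<aleph>\<^sub>1\<close> branches: given \<open>\<aleph>\<^sub>1\<close>
  distinct branches, their pairwise splitting levels are bounded below the regular
  cardinal \<open>\<omega>\<^sub>2\<close>, so at any level \<open>\<beta> \<in> A\<^sub>\<iota>\<close> above that bound and above \<open>\<alpha>\<close> they pass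
  through pairwise distinct nodes and hence have pairwise distinct values \<open>b(\<beta>) \<le> \<zeta>\<close>,
  which is impossible as \<open>\<zeta>\<close> has only countably many predecessors. Thus there are at
  most \<open>\<aleph>\<^sub>2\<close> branches, contradicting the Kurepa property.\<close>

lemma Field_ord_rel [simp]: "Field (ord_rel :: ('a::wellorder) rel) = UNIV"
  unfolding ord_rel_def Field_def by auto

lemma underS_ord_rel [simp]: "underS (ord_rel :: ('a::wellorder) rel) a = {..<a}"
  unfolding ord_rel_def underS_def by auto

lemma card_of_UNIV_ordIso_ord_rel:
  "card_order (ord_rel :: ('a::wellorder) rel) \<Longrightarrow> |UNIV :: 'a set| =o (ord_rel :: 'a rel)"
  by (rule ordIso_symmetric[OF card_of_unique])

lemma Cinfinite_ord_rel_cardSuc: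
  assumes "(ord_rel :: ('a::wellorder) rel) =o cardSuc r" "Cinfinite r"
  shows "Cinfinite (ord_rel :: 'a rel)"
  using Cinfinite_cong[OF ordIso_symmetric[OF assms(1)] Cinfinite_cardSuc[OF assms(2)]] .

lemma regularCard_ord_rel_cardSuc:
  assumes "(ord_rel :: ('a::wellorder) rel) =o cardSuc r" "Cinfinite r"
  shows "regularCard (ord_rel :: 'a rel)"
  using regularCard_ordIso[OF ordIso_symmetric[OF assms(1)] Cinfinite_cardSuc regularCard_cardSuc]
    assms(2) by blast

lemma card_of_UNIV_ordLess_cardSuc:
  assumes "card_order (ord_rel :: ('j::wellorder) rel)"
    and "(ord_rel :: ('k::wellorder) rel) =o cardSuc (ord_rel :: 'j rel)"
  shows "|UNIV :: 'j set| <o (ord_rel :: 'k rel)"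
  using card_of_UNIV_ordIso_ord_rel[OF assms(1)] cardSuc_greater[of "ord_rel :: 'j rel"]
    assms ordIso_symmetric ordIso_ordLess_trans ordLess_ordIso_trans by fastforce

lemma card_of_atMost_ordLess:
  assumes "card_order (ord_rel :: ('a::wellorder) rel)" "infinite (UNIV :: 'a set)"
  shows "|{..a :: 'a}| <o |UNIV :: 'a set|"
proof -
  have "|{..<a}| <o |UNIV :: 'a set|"
    using card_of_underS[of "ord_rel :: 'a rel" a] card_of_UNIV_ordIso_ord_rel[OF assms(1)] assms(1)
    by (auto intro: ordLess_ordIso_trans ordIso_symmetric)
  moreover have "|{a}| <o |UNIV :: 'a set|"
    using finite_ordLess_infinite[OF card_of_Well_order card_of_Well_order, of "{a}" UNIV] assms(2)
    by (simp add: Field_card_of)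
  moreover have "{..a} = {a} \<union> {..<a}" by auto
  ultimately show ?thesis using card_of_Un_ordLess_infinite[OF assms(2)] by metis
qed

lemma bounded_if_card_of_ordLess_regularCard:
  assumes "regularCard (ord_rel :: ('a::wellorder) rel)" "|S :: 'a set| <o (ord_rel :: 'a rel)"
  shows "\<exists>\<gamma>. \<forall>s\<in>S. s \<le> \<gamma>"
proof -
  have "\<not> cofinal S (ord_rel :: 'a rel)"
    using assms not_ordLess_ordIso unfolding regularCard_def by fastforce
  then obtain \<gamma> where "\<forall>s\<in>S. \<gamma> = s \<or> \<not> \<gamma> \<le> s" unfolding cofinal_def ord_rel_def by auto
  then show ?thesis by (metis order.refl less_imp_le not_le)
qed

lemma cofinal_branch_level_unique:
  assumes "is_tree lev lt" "cofinal_branch lev lt B"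
    and "x \<in> B" "x \<in> lev \<alpha>" "y \<in> B" "y \<in> lev \<alpha>"
  shows "x = y"
  using assms unfolding is_tree_def cofinal_branch_def by blast

lemma cofinal_branch_level_below:
  assumes T: "is_tree lev lt" and B: "cofinal_branch lev lt B"
    and x: "x \<in> B" "x \<in> lev \<beta>" and y: "y \<in> lev \<delta>" "lt y x"
  shows "B \<inter> lev \<delta> = {y}"
proof -
  have "y \<in> B" using B x y unfolding cofinal_branch_def by blast
  then show ?thesis using cofinal_branch_level_unique[OF T B] y by blast
qed

lemma cofinal_branches_agree_below:
  assumes T: "is_tree lev lt" and B: "cofinal_branch lev lt B" and B': "cofinal_branch lev lt B'"
    and x: "x \<in> B" "x \<in> B'" "x \<in> lev \<beta>" and "\<delta> < \<beta>"
  shows "B \<inter> lev \<delta> = B' \<inter> lev \<delta>"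
proof -
  obtain y where "y \<in> lev \<delta>" "lt y x" using T x \<open>\<delta> < \<beta>\<close> unfolding is_tree_def by blast
  then show ?thesis
    using cofinal_branch_level_below[OF T B] cofinal_branch_level_below[OF T B'] x by metis
qed

lemma cofinal_branch_eqI:
  assumes "cofinal_branch lev lt B" "cofinal_branch lev lt B'" "\<And>\<delta>. B \<inter> lev \<delta> = B' \<inter> lev \<delta>"
  shows "B = B'"
  using assms unfolding cofinal_branch_def tree_nodes_def by blast

lemma branch_fun_mem:
  assumes "cofinal_branch lev lt B" "range (\<tau> \<beta>) = lev \<beta>"
  shows "\<tau> \<beta> (branch_fun \<tau> B \<beta>) \<in> B \<inter> lev \<beta>"
proof -
  obtain x where "x \<in> B" "x \<in> lev \<beta>" using assms(1) unfolding cofinal_branch_def by blast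
  then obtain \<xi> where "\<tau> \<beta> \<xi> \<in> B" using assms(2) by (metis rangeE)
  then have "\<tau> \<beta> (branch_fun \<tau> B \<beta>) \<in> B" unfolding branch_fun_def by (rule LeastI)
  then show ?thesis using assms(2) by blast
qed

lemma branch_fun_eq_imp_agree_below:
  assumes T: "is_tree lev lt" and B: "cofinal_branch lev lt B" and B': "cofinal_branch lev lt B'"
    and tau: "range (\<tau> \<beta>) = lev \<beta>"
    and eq: "branch_fun \<tau> B \<beta> = branch_fun \<tau> B' \<beta>" and "\<delta> < \<beta>"
  shows "B \<inter> lev \<delta> = B' \<inter> lev \<delta>"
proof (rule cofinal_branches_agree_below[OF T B B' _ _ _ \<open>\<delta> < \<beta>\<close>])
  show "\<tau> \<beta> (branch_fun \<tau> B \<beta>) \<in> B" "\<tau> \<beta> (branch_fun \<tau> B \<beta>) \<in> lev \<beta>"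
    using branch_fun_mem[where \<tau> = \<tau>, OF B tau] by auto
  show "\<tau> \<beta> (branch_fun \<tau> B \<beta>) \<in> B'"
    using branch_fun_mem[where \<tau> = \<tau>, OF B' tau] eq by auto
qed

lemma branch_fun_eventually_inj_on:
  fixes \<tau> :: "'k::wellorder \<Rightarrow> 'j::wellorder \<Rightarrow> 'n"
  assumes T: "is_tree lev lt" and tau: "\<And>\<alpha>. range (\<tau> \<alpha>) = lev \<alpha>"
    and branches: "\<And>B. B \<in> \<B> \<Longrightarrow> cofinal_branch lev lt B"
    and reg: "regularCard (ord_rel :: 'k rel)" "Cinfinite (ord_rel :: 'k rel)"
    and small: "|\<B>| <o (ord_rel :: 'k rel)"
  shows "\<exists>\<gamma>. \<forall>\<beta>. \<gamma> < \<beta> \<longrightarrow> inj_on (\<lambda>B. branch_fun \<tau> B \<beta>) \<B>"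
proof -
  define split_level where "split_level B B' = (SOME \<delta>. B \<inter> lev \<delta> \<noteq> B' \<inter> lev \<delta>)" for B B'
  have split_level: "B \<inter> lev (split_level B B') \<noteq> B' \<inter> lev (split_level B B')"
    if "B \<in> \<B>" "B' \<in> \<B>" "B \<noteq> B'" for B B'
  proof -
    have "\<exists>\<delta>. B \<inter> lev \<delta> \<noteq> B' \<inter> lev \<delta>"
      using cofinal_branch_eqI[OF branches[OF that(1)] branches[OF that(2)]] that(3) by blast
    then show ?thesis unfolding split_level_def by (rule someI_ex)
  qed
  have "stable (ord_rel :: 'k rel)"
    using regularCard_stable[OF _ _ reg(1)] reg(2) unfolding cinfinite_def by blast
  then have "|\<B> \<times> \<B>| <o (ord_rel :: 'k rel)" using stable_elim[OF _ small small] by blast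
  then have "|case_prod split_level ` (\<B> \<times> \<B>)| <o (ord_rel :: 'k rel)"
    using card_of_image ordLeq_ordLess_trans by blast
  then obtain \<gamma> where "\<forall>s \<in> case_prod split_level ` (\<B> \<times> \<B>). s \<le> \<gamma>"
    using bounded_if_card_of_ordLess_regularCard[OF reg(1)] by blast
  then have \<gamma>: "split_level B B' \<le> \<gamma>" if "B \<in> \<B>" "B' \<in> \<B>" for B B'
    using that by blast
  have "inj_on (\<lambda>B. branch_fun \<tau> B \<beta>) \<B>" if "\<gamma> < \<beta>" for \<beta>
  proof (rule inj_onI, rule ccontr)
    fix B B' assume B: "B \<in> \<B>" "B' \<in> \<B>"
      and eq: "branch_fun \<tau> B \<beta> = branch_fun \<tau> B' \<beta>" and "B \<noteq> B'"
    have "split_level B B' < \<beta>" using \<gamma>[OF B] \<open>\<gamma> < \<beta>\<close> by (rule order.strict_trans1)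
    then have "B \<inter> lev (split_level B B') = B' \<inter> lev (split_level B B')"
      by (rule branch_fun_eq_imp_agree_below[OF T branches[OF B(1)] branches[OF B(2)] tau eq])
    then show False using split_level[OF B \<open>B \<noteq> B'\<close>] by blast
  qed
  then show ?thesis by blast
qed

definition bounded_branches ::
  "('k::wellorder \<Rightarrow> 'n set) \<Rightarrow> ('n \<Rightarrow> 'n \<Rightarrow> bool) \<Rightarrow> ('k \<Rightarrow> 'j::wellorder \<Rightarrow> 'n) \<Rightarrow>
    'k set \<Rightarrow> 'k \<Rightarrow> 'j \<Rightarrow> 'n set set" where
  "bounded_branches lev lt \<tau> A \<alpha> \<zeta> =
     {B. cofinal_branch lev lt B \<and> (\<forall>\<beta>\<in>A. \<alpha> < \<beta> \<longrightarrow> branch_fun \<tau> B \<beta> \<le> \<zeta>)}"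

lemma not_oscillates_imp_bounded_branches:
  assumes "cofinal_branch lev lt B" "\<not> oscillates (branch_fun \<tau> B) A"
  shows "\<exists>\<alpha> \<zeta>. B \<in> bounded_branches lev lt \<tau> A \<alpha> \<zeta>"
proof -
  obtain \<alpha> \<zeta> where "\<forall>\<beta>. \<not> (\<alpha> < \<beta> \<and> \<beta> \<in> A \<and> \<zeta> < branch_fun \<tau> B \<beta>)"
    using assms(2) unfolding oscillates_def by blast
  then have "B \<in> bounded_branches lev lt \<tau> A \<alpha> \<zeta>"
    using assms(1) unfolding bounded_branches_def by (auto simp: not_less)
  then show ?thesis by blast
qed

lemma card_of_bounded_branches:
  fixes \<tau> :: "'k::wellorder \<Rightarrow> 'j::wellorder \<Rightarrow> 'n"
  assumes j: "card_order (ord_rel :: 'j rel)" "infinite (UNIV :: 'j set)"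
    and k: "regularCard (ord_rel :: 'k rel)" "Cinfinite (ord_rel :: 'k rel)"
      "|UNIV :: 'j set| <o (ord_rel :: 'k rel)"
    and T: "is_tree lev lt" and tau: "\<And>\<alpha>. range (\<tau> \<alpha>) = lev \<alpha>"
    and unb: "unbounded A"
  shows "|bounded_branches lev lt \<tau> A \<alpha> \<zeta>| \<le>o |UNIV :: 'j set|"
proof (rule ccontr)
  assume "\<not> ?thesis"
  then have "|UNIV :: 'j set| \<le>o |bounded_branches lev lt \<tau> A \<alpha> \<zeta>|"
    using not_ordLeq_iff_ordLess[OF card_of_Well_order card_of_Well_order] ordLess_imp_ordLeq by blast
  then obtain g :: "'j \<Rightarrow> 'n set" where g: "inj g" "range g \<subseteq> bounded_branches lev lt \<tau> A \<alpha> \<zeta>"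
    unfolding card_of_ordLeq[symmetric] by blast
  have "|range g| \<le>o |UNIV :: 'j set|" by (rule card_of_image)
  then have "|range g| <o (ord_rel :: 'k rel)" using k(3) ordLeq_ordLess_trans by blast
  moreover have "cofinal_branch lev lt B" if "B \<in> range g" for B
    using g(2) that unfolding bounded_branches_def by blast
  ultimately obtain \<gamma> where \<gamma>: "\<And>\<beta>. \<gamma> < \<beta> \<Longrightarrow> inj_on (\<lambda>B. branch_fun \<tau> B \<beta>) (range g)"
    using branch_fun_eventually_inj_on[OF T tau _ k(1,2)] by metis
  obtain \<beta> where \<beta>: "\<beta> \<in> A" "max \<gamma> \<alpha> < \<beta>" using unb unfolding unbounded_def by blast
  have "inj (\<lambda>i. branch_fun \<tau> (g i) \<beta>)"
    using comp_inj_on[OF g(1) \<gamma>] \<beta>(2) by (simp add: comp_def)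
  moreover have "range (\<lambda>i. branch_fun \<tau> (g i) \<beta>) \<subseteq> {..\<zeta>}"
    using g(2) \<beta> unfolding bounded_branches_def by auto
  ultimately have "|UNIV :: 'j set| \<le>o |{..\<zeta>}|" unfolding card_of_ordLeq[symmetric] by blast
  then show False using card_of_atMost_ordLess[OF j] not_ordLess_ordLeq by blast
qed

lemma card_of_non_oscillating_branches:
  fixes \<tau> :: "'k::wellorder \<Rightarrow> 'j::wellorder \<Rightarrow> 'n" and A :: "'i \<Rightarrow> 'k set"
  assumes j: "card_order (ord_rel :: 'j rel)" "infinite (UNIV :: 'j set)"
    and k: "card_order (ord_rel :: 'k rel)" "regularCard (ord_rel :: 'k rel)"
      "Cinfinite (ord_rel :: 'k rel)" "|UNIV :: 'j set| <o (ord_rel :: 'k rel)"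
    and i: "|UNIV :: 'i set| \<le>o (ord_rel :: 'k rel)"
    and T: "is_tree lev lt" and tau: "\<And>\<alpha>. range (\<tau> \<alpha>) = lev \<alpha>"
    and unb: "\<And>\<iota>. unbounded (A \<iota>)"
  shows "|{B. cofinal_branch lev lt B \<and> (\<exists>\<iota>. \<not> oscillates (branch_fun \<tau> B) (A \<iota>))}|
           \<le>o (ord_rel :: 'k rel)"
proof -
  let ?bounded = "\<lambda>(\<iota>, \<alpha>, \<zeta>). bounded_branches lev lt \<tau> (A \<iota>) \<alpha> \<zeta>"
  have cover: "{B. cofinal_branch lev lt B \<and> (\<exists>\<iota>. \<not> oscillates (branch_fun \<tau> B) (A \<iota>))}
      \<subseteq> \<Union>(range ?bounded)"
    using not_oscillates_imp_bounded_branches by fastforce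
  have inf: "\<not> finite (Field (ord_rel :: 'k rel))" and card: "Card_order (ord_rel :: 'k rel)"
    using k(3) unfolding cinfinite_def by simp_all
  have "|\<Union>(range ?bounded)| \<le>o (ord_rel :: 'k rel)"
  proof (rule card_of_UNION_ordLeq_infinite_Field[OF inf card])
    have kj: "|UNIV :: ('k \<times> 'j) set| \<le>o (ord_rel :: 'k rel)"
      using card_of_Times_ordLeq_infinite_Field[OF inf
          ordIso_imp_ordLeq[OF card_of_UNIV_ordIso_ord_rel[OF k(1)]] ordLess_imp_ordLeq[OF k(4)] card]
      by simp
    show "|UNIV :: ('i \<times> 'k \<times> 'j) set| \<le>o (ord_rel :: 'k rel)"
      using card_of_Times_ordLeq_infinite_Field[OF inf i kj card] by simp
    show "\<forall>p\<in>UNIV. |?bounded p| \<le>o (ord_rel :: 'k rel)"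
      using ordLeq_transitive[OF card_of_bounded_branches[OF j k(2,3,4) T tau unb]
          ordLess_imp_ordLeq[OF k(4)]]
      by (simp split: prod.split)
  qed
  with card_of_mono1[OF cover] show ?thesis by (rule ordLeq_transitive)
qed

theorem lemma9:
  fixes lev :: "'k::wellorder \<Rightarrow> 'n set"
    and lt :: "'n \<Rightarrow> 'n \<Rightarrow> bool"
    and \<tau> :: "'k \<Rightarrow> 'j::wellorder \<Rightarrow> 'n"
    and A :: "'k \<Rightarrow> 'k set"
  assumes omega1: "card_order (ord_rel :: 'j rel)" "(ord_rel :: 'j rel) =o cardSuc natLeq"
    and omega2: "card_order (ord_rel :: 'k rel)" "(ord_rel :: 'k rel) =o cardSuc (ord_rel :: 'j rel)"
    and kurepa: "kurepa_tree lev lt TYPE('j)"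
    and tau: "\<And>\<alpha>. range (\<tau> \<alpha>) = lev \<alpha>"
    and unb: "\<And>\<iota>. unbounded (A \<iota>)"
  shows "\<exists>B. cofinal_branch lev lt B \<and> (\<forall>\<iota>. oscillates (branch_fun \<tau> B) (A \<iota>))"
proof (rule ccontr)
  assume "\<not> ?thesis"
  then have all_branches: "{B. cofinal_branch lev lt B} =
      {B. cofinal_branch lev lt B \<and> (\<exists>\<iota>. \<not> oscillates (branch_fun \<tau> B) (A \<iota>))}"
    by blast
  have j: "Cinfinite (ord_rel :: 'j rel)"
    using Cinfinite_ord_rel_cardSuc[OF omega1(2) natLeq_Cinfinite] .
  have k: "Cinfinite (ord_rel :: 'k rel)"
    using Cinfinite_ord_rel_cardSuc[OF omega2(2) j] .
  have "|{B. cofinal_branch lev lt B}| \<le>o (ord_rel :: 'k rel)"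
    unfolding all_branches
  proof (rule card_of_non_oscillating_branches[OF omega1(1) _ omega2(1) _ k _ _ _ tau unb])
    show "infinite (UNIV :: 'j set)" using j unfolding cinfinite_def by simp
    show "regularCard (ord_rel :: 'k rel)" using regularCard_ord_rel_cardSuc[OF omega2(2) j] .
    show "|UNIV :: 'j set| <o (ord_rel :: 'k rel)"
      using card_of_UNIV_ordLess_cardSuc[OF omega1(1) omega2(2)] .
    show "|UNIV :: 'k set| \<le>o (ord_rel :: 'k rel)"
      using card_of_UNIV_ordIso_ord_rel[OF omega2(1)] by (rule ordIso_imp_ordLeq)
    show "is_tree lev lt" using kurepa unfolding kurepa_tree_def by blast
  qed
  moreover have "(ord_rel :: 'k rel) <o cardSuc (ord_rel :: 'k rel)"
    using cardSuc_greater k by blast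
  moreover have "cardSuc (ord_rel :: 'k rel) \<le>o |{B. cofinal_branch lev lt B}|"
    using kurepa unfolding kurepa_tree_def by blast
  ultimately show False using not_ordLess_ordLeq ordLess_ordLeq_trans by blast
qed

end
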